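(* Let $X^{2n}$ be a quasitoric manifold over a simple polytope $P^n$ and let $T^{n-1}\subset T^n$ be a subtorus such that the induced action of $T^{n-1}$ on $X^{2n}$ has connected stabilizers. Let \[ Z_{\mathrm{non}}=(Y_{\mathrm{non}}\times D^2)\cup(P^n\times\partial D^2)\subset \partial(P^n\times D^2)\cong S^{n+1}. \] Then $Z_{\mathrm{non}}$ is homotopy equivalent to the orbit space $Q^{n+1}=X^{2n}/T^{n-1}$.
   Context: For each facet $F$ of $P^n$, $\lambda(F)\in N=\mathrm{Hom}(T^1,T^n)\cong\mathbb{Z}^n$ is the primitive vector of the circle subgroup of $T^n$ stabilizing points of $X^{2n}$ over the interior of $F$. Let $\Pi\subset N$ be the image of $\mathrm{Hom}(T^1,T^{n-1})$. A facet $F$ is special if $\lambda(F)\in\Pi$; a proper face of $P^n$ is special if all facets containing it are special, and non-special otherwise. $Y_{\mathrm{non}}\subset\partial P^n$ is the union of all (closed) non-special faces. $D^2$ is the closed 2-disc. *)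

theory Defs
  imports "HOL-Analysis.Analysis"
begin

text \<open>Quotient of a topological space by a relation R (intended to be an equivalence
relation on the carrier): points are the equivalence classes, a set of classes is open
iff the union of its members is open.\<close>
definition quotient_topology :: "'a topology \<Rightarrow> ('a \<times> 'a) set \<Rightarrow> 'a set topology" where
  "quotient_topology X R = topology (\<lambda>U. U \<subseteq> topspace X // R \<and> openin X (\<Union>U))"

definition int_lattice :: "(real^'n) set" where
  "int_lattice = {v. \<forall>i. v $ i \<in> \<int>}"

definition torus :: "(complex^'n) set" where
  "torus = {z. \<forall>i. cmod (z $ i) = 1}"

definition tmul :: "complex^'n \<Rightarrow> complex^'n \<Rightarrow> complex^'n" where
  "tmul z w = (\<chi> i. z $ i * w $ i)"

text \<open>Exponential map R^n = Lie(T^n) \<rightarrow> T^n, with kernel Z^n.\<close>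
definition texp :: "real^'n \<Rightarrow> complex^'n" where
  "texp v = (\<chi> i. cis (2 * pi * v $ i))"

definition facets_at :: "(real^'n) set \<Rightarrow> real^'n \<Rightarrow> (real^'n) set set" where
  "facets_at P p = {F. F facet_of P \<and> p \<in> F}"

definition simple_polytope :: "(real^'n) set \<Rightarrow> bool" where
  "simple_polytope P \<longleftrightarrow> polytope P \<and> aff_dim P = int CARD('n) \<and>
     (\<forall>v. v extreme_point_of P \<longrightarrow> card (facets_at P v) = CARD('n))"

text \<open>Characteristic function: each facet gets an integer vector, and at every vertex
the vectors of the facets through it form a basis of Z^n (they generate Z^n as a group;
since there are n of them this is the basis condition, and it implies primitivity).\<close>
definition characteristic_function :: "(real^'n) set \<Rightarrow> ((real^'n) set \<Rightarrow> real^'n) \<Rightarrow> bool" where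
  "characteristic_function P lam \<longleftrightarrow>
     (\<forall>F. F facet_of P \<longrightarrow> lam F \<in> int_lattice) \<and>
     (\<forall>v. v extreme_point_of P \<longrightarrow>
        (\<forall>z \<in> int_lattice. \<exists>c :: (real^'n) set \<Rightarrow> int.
            z = (\<Sum>F \<in> facets_at P v. of_int (c F) *\<^sub>R lam F)))"

definition Tface :: "(real^'n) set \<Rightarrow> ((real^'n) set \<Rightarrow> real^'n) \<Rightarrow> real^'n \<Rightarrow> (complex^'n) set" where
  "Tface P lam p = texp ` span (lam ` facets_at P p)"

definition qt_rel :: "(real^'n) set \<Rightarrow> ((real^'n) set \<Rightarrow> real^'n)
    \<Rightarrow> (((real^'n) \<times> (complex^'n)) \<times> ((real^'n) \<times> (complex^'n))) set" where
  "qt_rel P lam = {((p, t), (q, s)). p \<in> P \<and> q \<in> P \<and> t \<in> torus \<and> s \<in> torus \<and>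
       p = q \<and> (\<exists>g \<in> Tface P lam p. t = tmul g s)}"

definition quasitoric :: "(real^'n) set \<Rightarrow> ((real^'n) set \<Rightarrow> real^'n)
    \<Rightarrow> ((real^'n) \<times> (complex^'n)) set topology" where
  "quasitoric P lam = quotient_topology
       (prod_topology (top_of_set P) (top_of_set torus)) (qt_rel P lam)"

definition qt_act :: "complex^'n \<Rightarrow> ((real^'n) \<times> (complex^'n)) set \<Rightarrow> ((real^'n) \<times> (complex^'n)) set" where
  "qt_act s c = (\<lambda>(p, t). (p, tmul s t)) ` c"

definition qt_stabilizer :: "(complex^'n) set \<Rightarrow> ((real^'n) \<times> (complex^'n)) set \<Rightarrow> (complex^'n) set" where
  "qt_stabilizer H c = {s \<in> H. qt_act s c = c}"

definition orbit_rel :: "(real^'n) set \<Rightarrow> ((real^'n) set \<Rightarrow> real^'n) \<Rightarrow> (complex^'n) set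
    \<Rightarrow> (((real^'n) \<times> (complex^'n)) set \<times> ((real^'n) \<times> (complex^'n)) set) set" where
  "orbit_rel P lam H = {(c, d). c \<in> topspace (quasitoric P lam) \<and> d \<in> topspace (quasitoric P lam) \<and>
       (\<exists>s \<in> H. d = qt_act s c)}"

definition orbit_space :: "(real^'n) set \<Rightarrow> ((real^'n) set \<Rightarrow> real^'n) \<Rightarrow> (complex^'n) set
    \<Rightarrow> ((real^'n) \<times> (complex^'n)) set set topology" where
  "orbit_space P lam H = quotient_topology (quasitoric P lam) (orbit_rel P lam H)"

text \<open>The subtorus T^{n-1} = texp V, where V = Lie(T^{n-1}) is a rational subspace of
dimension n-1; Pi = V \<inter> Z^n is the image of Hom(T^1,T^{n-1}) in N = Z^n.\<close>
definition rational_hyperplane :: "(real^'n) set \<Rightarrow> bool" where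
  "rational_hyperplane V \<longleftrightarrow> subspace V \<and> dim V = CARD('n) - 1 \<and>
      V = span (V \<inter> int_lattice)"

definition special_facet :: "(real^'n) set \<Rightarrow> ((real^'n) set \<Rightarrow> real^'n) \<Rightarrow> (real^'n) set \<Rightarrow> (real^'n) set \<Rightarrow> bool" where
  "special_facet P lam V F \<longleftrightarrow> F facet_of P \<and> lam F \<in> V \<inter> int_lattice"

definition special_face :: "(real^'n) set \<Rightarrow> ((real^'n) set \<Rightarrow> real^'n) \<Rightarrow> (real^'n) set \<Rightarrow> (real^'n) set \<Rightarrow> bool" where
  "special_face P lam V G \<longleftrightarrow> (\<forall>F. F facet_of P \<and> G \<subseteq> F \<longrightarrow> special_facet P lam V F)"

definition Y_non :: "(real^'n) set \<Rightarrow> ((real^'n) set \<Rightarrow> real^'n) \<Rightarrow> (real^'n) set \<Rightarrow> (real^'n) set" where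
  "Y_non P lam V = \<Union>{G. G face_of P \<and> G \<noteq> {} \<and> G \<noteq> P \<and> \<not> special_face P lam V G}"

definition Z_non :: "(real^'n) set \<Rightarrow> ((real^'n) set \<Rightarrow> real^'n) \<Rightarrow> (real^'n) set \<Rightarrow> ((real^'n) \<times> complex) set" where
  "Z_non P lam V = (Y_non P lam V \<times> cball 0 1) \<union> (P \<times> sphere 0 1)"

end

theory Submission
  imports Defs
begin

text \<open>Choose a primitive integer normal c of the Lie algebra V of T^{n-1} and u \<in> Z^n with
  c \<bullet> u = 1. The character \<chi>_c : T^n \<rightarrow> S^1 then has kernel T^{n-1}, and the circle with
  direction u is a section of it. Hence Q = X/T^{n-1} is P \<times> S^1 with the circle over each point
  of Y_non collapsed: off Y_non all isotropy lies in T^{n-1}, whereas at a point of Y_non some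
  non-special facet contributes an isotropy circle transverse to T^{n-1}. Accordingly
  Z_non \<rightarrow> Q sends (p, w) to [p, u(w)] on P \<times> S^1 and to [p, 1] on Y_non \<times> D^2.

  As a finite union of faces, Y_non is a closed ANR. So there are a deformation H of P rel
  Y_non that pushes a neighbourhood of Y_non into Y_non and a cutoff \<sigma> that vanishes on Y_non
  and is 1 off that neighbourhood; the inverse Q \<rightarrow> Z_non is [p, t] \<mapsto> (H_1(p), \<sigma>(p) \<chi>_c(t)).
  The composite on Q is homotopic to the identity by undoing H, the one on Z_non by rescaling
  the disc coordinate and then undoing H.\<close>

lemma Union_Int_quotient:
  assumes "equiv A R" "S \<subseteq> A // R" "T \<subseteq> A // R"
  shows "\<Union>(S \<inter> T) = \<Union>S \<inter> \<Union>T"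
proof
  show "\<Union>S \<inter> \<Union>T \<subseteq> \<Union>(S \<inter> T)"
  proof
    fix x assume "x \<in> \<Union>S \<inter> \<Union>T"
    then obtain C D where CD: "C \<in> S" "D \<in> T" "x \<in> C" "x \<in> D" by auto
    then have "C = D" using quotient_disj[OF assms(1), of C D] assms(2,3) by blast
    with CD show "x \<in> \<Union>(S \<inter> T)" by auto
  qed
qed auto

lemma openin_quotient_topology:
  assumes "equiv (topspace X) R"
  shows "openin (quotient_topology X R) U \<longleftrightarrow> U \<subseteq> topspace X // R \<and> openin X (\<Union>U)"
proof -
  let ?L = "\<lambda>U. U \<subseteq> topspace X // R \<and> openin X (\<Union>U)"
  have "?L (S \<inter> T)" if "?L S" "?L T" for S T
    using that Union_Int_quotient[OF assms] by auto
  moreover have "?L (\<Union>K)" if "\<forall>S\<in>K. ?L S" for K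
  proof -
    have "\<Union>(\<Union>K) = \<Union>(Union ` K)" by auto
    with that show ?thesis by auto
  qed
  ultimately have "istopology ?L" unfolding istopology_def by blast
  then show ?thesis by (simp add: quotient_topology_def topology_inverse')
qed

lemma topspace_quotient_topology:
  assumes "equiv (topspace X) R"
  shows "topspace (quotient_topology X R) = topspace X // R"
proof -
  have "openin (quotient_topology X R) (topspace X // R)"
    using Union_quotient[OF assms] by (simp add: openin_quotient_topology[OF assms])
  moreover have "topspace (quotient_topology X R) \<subseteq> topspace X // R"
    using openin_quotient_topology[OF assms, of "topspace (quotient_topology X R)"] by simp
  ultimately show ?thesis by (simp add: openin_subset subset_antisym)
qed

lemma quotient_map_quotient_topology:
  assumes "equiv (topspace X) R"
  shows "quotient_map X (quotient_topology X R) (\<lambda>x. R``{x})"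
  unfolding quotient_map_def topspace_quotient_topology[OF assms]
proof (intro conjI allI impI)
  show "(\<lambda>x. R``{x}) ` topspace X = topspace X // R" by (auto simp: quotient_def)
next
  fix U assume U: "U \<subseteq> topspace X // R"
  have "{x \<in> topspace X. R``{x} \<in> U} = \<Union>U"
  proof
    show "{x \<in> topspace X. R``{x} \<in> U} \<subseteq> \<Union>U"
      using assms by (auto simp: equiv_def refl_on_def)
    show "\<Union>U \<subseteq> {x \<in> topspace X. R``{x} \<in> U}"
    proof
      fix x assume "x \<in> \<Union>U"
      then obtain C where "C \<in> U" "x \<in> C" by auto
      with U obtain y where "y \<in> topspace X" "C = R``{y}" by (auto simp: quotient_def)
      with \<open>x \<in> C\<close> have "R``{x} = C" "x \<in> topspace X"
        using equiv_class_eq[OF assms] assms by (auto simp: equiv_def refl_on_def)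
      with \<open>C \<in> U\<close> show "x \<in> {x \<in> topspace X. R``{x} \<in> U}" by simp
    qed
  qed
  then show "openin X {x \<in> topspace X. R``{x} \<in> U} = openin (quotient_topology X R) U"
    using U by (simp add: openin_quotient_topology[OF assms])
qed

lemma homotopic_with_by_homotopy:
  assumes "continuous_map (prod_topology (top_of_set {0..1::real}) X) Y h"
    and "\<And>x. x \<in> topspace X \<Longrightarrow> h (0, x) = f x" "\<And>x. x \<in> topspace X \<Longrightarrow> h (1, x) = g x"
  shows "homotopic_with (\<lambda>x. True) X Y f g"
proof -
  have "homotopic_with (\<lambda>x. True) X Y (\<lambda>x. h (0, x)) (\<lambda>x. h (1, x))"
    unfolding homotopic_with_def using assms(1) by blast
  then show ?thesis by (rule homotopic_with_eq) (use assms in auto)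
qed

lemma homotopic_with_by_homotopy_on:
  assumes "continuous_on ({0..1::real} \<times> S) h" "h ` ({0..1} \<times> S) \<subseteq> T"
    and "\<And>x. x \<in> S \<Longrightarrow> h (0, x) = f x" "\<And>x. x \<in> S \<Longrightarrow> h (1, x) = g x"
  shows "homotopic_with (\<lambda>x. True) (top_of_set S) (top_of_set T) f g"
  by (rule homotopic_with_by_homotopy)
    (use assms in \<open>auto simp: prod_topology_subtopology_eu continuous_map_subtopology_eu\<close>)

lemma continuous_map_cases_closed:
  assumes "closed S" "closed T"
    and "continuous_map (top_of_set S) X f" "continuous_map (top_of_set T) X g"
    and "\<And>x. x \<in> S \<and> \<not> P x \<or> x \<in> T \<and> P x \<Longrightarrow> f x = g x"
  shows "continuous_map (top_of_set (S \<union> T)) X (\<lambda>x. if P x then f x else g x)"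
proof (rule pasting_lemma_closed[where I = "{True, False}" and T = "\<lambda>b. if b then S else T"
      and f = "\<lambda>b. if b then f else g"])
  show "closedin (top_of_set (S \<union> T)) (if b then S else T)" for b
    using assms(1,2) by (auto intro: closed_subset)
  show "continuous_map (subtopology (top_of_set (S \<union> T)) (if b then S else T)) X (if b then f else g)" for b
    using assms(3,4) by (simp add: subtopology_subtopology Int_absorb1)
  show "\<exists>b. b \<in> {True, False} \<and> x \<in> (if b then S else T) \<and>
          (if P x then f x else g x) = (if b then f else g) x" if "x \<in> topspace (top_of_set (S \<union> T))" for x
    using that assms(5) by (cases "P x"; cases "x \<in> S") auto
qed (use assms(5) in auto)

section \<open>The torus, characters and cocharacters\<close>

lemma texp_nth: "texp v $ i = cis (2 * pi * v $ i)"
  by (simp add: texp_def)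

lemma tmul_texp: "tmul (texp a) (texp b) = texp (a + b)"
  by (simp add: vec_eq_iff tmul_def texp_def cis_mult distrib_left)

lemma texp_in_torus: "texp v \<in> torus"
  by (simp add: torus_def texp_def)

lemma sphere_cisE:
  assumes "z \<in> sphere (0::complex) 1"
  obtains r where "z = cis (2 * pi * r)"
proof
  have "cis (Arg z) = sgn z" using assms by (intro cis_Arg) auto
  also have "\<dots> = z" using assms by (simp add: sgn_div_norm)
  finally show "z = cis (2 * pi * (Arg z / (2 * pi)))" by simp
qed

lemma torus_texpE:
  assumes "t \<in> torus"
  obtains a where "t = texp a"
proof -
  have "\<exists>r. t $ i = cis (2 * pi * r)" for i
  proof -
    have "t $ i \<in> sphere 0 1" using assms by (simp add: torus_def)
    then show ?thesis by (metis sphere_cisE)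
  qed
  then obtain r where "\<And>i. t $ i = cis (2 * pi * r i)" by metis
  then have "t = texp (\<chi> i. r i)" by (simp add: vec_eq_iff texp_nth)
  then show thesis by (rule that)
qed

lemma torus_eq_range_texp: "torus = range texp"
  using texp_in_torus torus_texpE by blast

lemma texp_add_cong: "texp x = texp y \<Longrightarrow> texp (z + x) = texp (z + y)"
  by (metis tmul_texp)

text \<open>For integer vectors c and u, \<open>character c\<close> is the homomorphism T^n \<rightarrow> S^1
  dual to c and \<open>cocharacter u\<close> the circle subgroup S^1 \<rightarrow> T^n with direction u;
  the floors only turn the integer entries into exponents.\<close>

definition character :: "real^'n \<Rightarrow> complex^'n \<Rightarrow> complex" where
  "character c t = (\<Prod>i\<in>UNIV. (t $ i) powi \<lfloor>c $ i\<rfloor>)"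

definition cocharacter :: "real^'n \<Rightarrow> complex \<Rightarrow> complex^'n" where
  "cocharacter u z = (\<chi> i. z powi \<lfloor>u $ i\<rfloor>)"

lemma prod_cis: "finite S \<Longrightarrow> (\<Prod>i\<in>S. cis (f i)) = cis (\<Sum>i\<in>S. f i)"
  by (induction S rule: finite_induct) (auto simp: cis_mult)

lemma int_lattice_floor: "v \<in> int_lattice \<Longrightarrow> real_of_int \<lfloor>v $ i\<rfloor> = v $ i"
  by (metis Ints_cases floor_of_int int_lattice_def mem_Collect_eq)

lemma character_texp:
  assumes "c \<in> int_lattice"
  shows "character c (texp v) = cis (2 * pi * (c \<bullet> v))"
proof -
  have "character c (texp v) = (\<Prod>i\<in>UNIV. cis (c $ i * (2 * pi * v $ i)))"
    using assms by (simp add: character_def texp_nth cis_power_int int_lattice_floor)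
  also have "\<dots> = cis (\<Sum>i\<in>UNIV. c $ i * (2 * pi * v $ i))"
    by (simp add: prod_cis)
  also have "(\<Sum>i\<in>UNIV. c $ i * (2 * pi * v $ i)) = 2 * pi * (c \<bullet> v)"
    by (simp add: inner_vec_def sum_distrib_left algebra_simps)
  finally show ?thesis .
qed

lemma cocharacter_cis:
  assumes "u \<in> int_lattice"
  shows "cocharacter u (cis (2 * pi * r)) = texp (r *\<^sub>R u)"
  using assms by (simp add: cocharacter_def texp_def cis_power_int int_lattice_floor vec_eq_iff algebra_simps)

lemma character_in_sphere: "c \<in> int_lattice \<Longrightarrow> t \<in> torus \<Longrightarrow> character c t \<in> sphere 0 1"
  by (auto simp: torus_eq_range_texp character_texp)

lemma cocharacter_in_torus: "u \<in> int_lattice \<Longrightarrow> z \<in> sphere 0 1 \<Longrightarrow> cocharacter u z \<in> torus"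
  by (elim sphere_cisE) (simp add: cocharacter_cis texp_in_torus)

lemma character_cocharacter:
  assumes "c \<in> int_lattice" "u \<in> int_lattice" "c \<bullet> u = 1" "z \<in> sphere 0 1"
  shows "character c (cocharacter u z) = z"
proof -
  obtain r where "z = cis (2 * pi * r)" using assms(4) by (rule sphere_cisE)
  then show ?thesis using assms(1-3) by (simp add: cocharacter_cis character_texp)
qed

lemma continuous_on_character: "continuous_on torus (character c)"
  unfolding character_def
proof (intro continuous_on_prod continuous_on_power_int disjI2 ballI)
  fix i and t :: "complex^'n"
  show "continuous_on torus (\<lambda>t :: complex^'n. t $ i)" by (intro continuous_intros)
  assume "t \<in> torus"
  then have "cmod (t $ i) = 1" by (simp add: torus_def)
  then show "t $ i \<noteq> 0" by auto
qed

lemma continuous_on_cocharacter: "continuous_on (sphere 0 1) (cocharacter u)"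
  unfolding cocharacter_def
  by (intro continuous_on_vec_lambda continuous_on_power_int continuous_on_id disjI2) auto

section \<open>Primitive normal vectors of rational hyperplanes\<close>

lemma det_Ints:
  fixes A :: "real^'n^'n"
  assumes "\<And>i j. A $ i $ j \<in> \<int>"
  shows "det A \<in> \<int>"
  unfolding det_def using assms by (auto intro!: Ints_sum Ints_mult Ints_prod)

lemma det_replace_row_eq_inner:
  fixes b :: "'n \<Rightarrow> real^'n"
  shows "det (\<chi> i. if i = k then x else b i) = (\<chi> j. det (\<chi> i. if i = k then axis j 1 else b i)) \<bullet> x"
proof -
  have "det (\<chi> i. if i = k then x else b i)
      = det (\<chi> i. if i = k then (\<Sum>j\<in>UNIV. x $ j *s axis j 1) else b i)"
    by (simp only: basis_expansion)
  also have "\<dots> = (\<Sum>j\<in>UNIV. det (\<chi> i. if i = k then x $ j *s axis j 1 else b i))"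
    by (rule det_linear_row_sum) simp
  also have "\<dots> = (\<chi> j. det (\<chi> i. if i = k then axis j 1 else b i)) \<bullet> x"
    by (simp add: det_row_mul inner_vec_def mult.commute)
  finally show ?thesis .
qed

lemma rational_subspace_integer_basis:
  assumes "subspace V" "V = span (V \<inter> int_lattice)"
  obtains B where "B \<subseteq> V \<inter> int_lattice" "independent B" "span B = V"
proof -
  obtain B where B: "B \<subseteq> V \<inter> int_lattice" "independent B" "V \<inter> int_lattice \<subseteq> span B"
    by (rule maximal_independent_subset)
  have "span B = V"
  proof
    show "span B \<subseteq> V" using B(1) assms(1) by (simp add: span_minimal)
    have "span (V \<inter> int_lattice) \<subseteq> span B" using B(3) by (simp add: span_minimal)
    then show "V \<subseteq> span B" using assms(2) by simp
  qed
  with B show thesis using that by blast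
qed

text \<open>The normal is the generalised cross product of B = {b_1, ..., b_{n-1}}, i.e. the
  linear form x \<mapsto> det(x, b_1, ..., b_{n-1}).\<close>

lemma int_lattice_normal_of_independent:
  fixes B :: "(real^'n) set"
  assumes B: "independent B" "card B = CARD('n) - 1" "B \<subseteq> int_lattice"
  obtains a where "a \<in> int_lattice" "a \<noteq> 0" "\<And>b. b \<in> B \<Longrightarrow> a \<bullet> b = 0"
proof -
  have fin: "finite B" using B(1) by (rule independent_imp_finite)
  obtain i0 :: 'n where True by blast
  have "card B = card (UNIV - {i0})" using B(2) by (simp add: card_Diff_singleton)
  then obtain \<beta> where \<beta>: "bij_betw \<beta> (UNIV - {i0}) B"
    using finite_same_card_bij[of "UNIV - {i0}" B] fin by auto
  define M :: "real^'n \<Rightarrow> real^'n^'n" where "M x = (\<chi> i. if i = i0 then x else \<beta> i)" for x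
  define a where "a = (\<chi> j. det (M (axis j 1)))"
  have det_M: "det (M x) = a \<bullet> x" for x
    using det_replace_row_eq_inner[of i0 x \<beta>] by (simp add: M_def a_def)
  have "\<beta> i $ j \<in> \<int>" if "i \<noteq> i0" for i j
    using \<beta> that B(3) by (auto simp: bij_betw_def int_lattice_def)
  then have "a \<in> int_lattice"
    unfolding int_lattice_def a_def M_def by (auto simp: axis_def intro!: det_Ints)
  moreover have "a \<bullet> b = 0" if "b \<in> B" for b
  proof -
    obtain j where "j \<noteq> i0" "b = \<beta> j" using \<beta> \<open>b \<in> B\<close> by (auto simp: bij_betw_def)
    then have "det (M b) = 0"
      by (intro det_identical_rows[of i0 j]) (auto simp: M_def row_def vec_eq_iff)
    then show ?thesis by (simp add: det_M)
  qed
  moreover have "a \<noteq> 0"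
  proof -
    have "span B \<noteq> UNIV"
    proof
      assume "span B = UNIV"
      then have "card B = CARD('n)" using dim_span_eq_card_independent[OF B(1)] by simp
      with B(2) show False by (metis less_irrefl diff_less zero_less_card_finite zero_less_one)
    qed
    then obtain e where e: "e \<notin> span B" by blast
    have "rows (M e) = insert e B"
      using \<beta> by (auto simp: rows_def row_def M_def bij_betw_def)
    moreover have "independent (insert e B)" using B(1) e by (simp add: independent_insertI)
    moreover have "e \<notin> B" using e span_base by blast
    ultimately have "rank (M e) = CARD('n)"
      using fin B(2) by (simp add: row_rank_def dim_eq_card_independent)
    then show ?thesis using det_eq_0_rank[of "M e"] by (auto simp: det_M)
  qed
  ultimately show thesis using that by blast
qed

lemma rational_hyperplane_integer_normal:
  fixes V :: "(real^'n) set"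
  assumes "rational_hyperplane V"
  obtains a where "a \<in> int_lattice" "a \<noteq> 0" "V = {v. a \<bullet> v = 0}"
proof -
  have V: "subspace V" "dim V = CARD('n) - 1" "V = span (V \<inter> int_lattice)"
    using assms by (auto simp: rational_hyperplane_def)
  obtain B where B: "B \<subseteq> V \<inter> int_lattice" "independent B" "span B = V"
    using rational_subspace_integer_basis[OF V(1,3)] by blast
  have "card B = CARD('n) - 1" using dim_span_eq_card_independent[OF B(2)] B(3) V(2) by simp
  then obtain a where a: "a \<in> int_lattice" "a \<noteq> 0" "\<And>b. b \<in> B \<Longrightarrow> a \<bullet> b = 0"
    using int_lattice_normal_of_independent[OF B(2)] B(1) by blast
  have "V \<subseteq> {v. a \<bullet> v = 0}"
    using span_minimal[OF _ subspace_hyperplane, of B a] a(3) B(3) by blast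
  then have "V = {v. a \<bullet> v = 0}"
    using subspace_dim_equal[OF V(1) subspace_hyperplane] dim_hyperplane[OF a(2)] V(2) by simp
  with a show thesis using that by blast
qed

lemma sum_Gcd_bezout:
  fixes k :: "'a \<Rightarrow> int"
  assumes "finite S"
  shows "\<exists>u. (\<Sum>j\<in>S. u j * k j) = Gcd (k ` S)"
  using assms
proof (induction S rule: finite_induct)
  case (insert i S)
  then obtain u where u: "(\<Sum>j\<in>S. u j * k j) = Gcd (k ` S)" by blast
  obtain x y where "x * k i + y * Gcd (k ` S) = gcd (k i) (Gcd (k ` S))" using bezout_int by blast
  moreover have "(\<Sum>j\<in>S. (if j = i then x else y * u j) * k j) = y * (\<Sum>j\<in>S. u j * k j)"
    using insert(2) by (auto simp: sum_distrib_left mult.assoc intro!: sum.cong)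
  ultimately have "(\<Sum>j\<in>insert i S. (if j = i then x else y * u j) * k j) = Gcd (k ` insert i S)"
    using insert(1,2) u by simp
  then show ?case by (rule exI[where x = "\<lambda>j. if j = i then x else y * u j"])
qed simp

lemma int_lattice_primitive:
  fixes a :: "real^'n"
  assumes "a \<in> int_lattice" "a \<noteq> 0"
  obtains c u d where "c \<in> int_lattice" "u \<in> int_lattice" "c \<bullet> u = 1" "d \<noteq> 0" "a = d *\<^sub>R c"
proof -
  define k where "k j = \<lfloor>a $ j\<rfloor>" for j
  define g where "g = Gcd (range k)"
  have a_k: "a $ j = of_int (k j)" for j using assms(1) by (simp add: k_def int_lattice_floor)
  have g_dvd: "g dvd k j" for j by (simp add: g_def)
  have "g \<noteq> 0" using assms(2) a_k by (auto simp: g_def vec_eq_iff)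
  obtain v where v: "(\<Sum>j\<in>UNIV. v j * k j) = g" using sum_Gcd_bezout[of UNIV k] by (auto simp: g_def)
  define c :: "real^'n" where "c = (\<chi> j. of_int (k j div g))"
  define u :: "real^'n" where "u = (\<chi> j. of_int (v j))"
  have k_div: "real_of_int (k j div g) = of_int (k j) / of_int g" for j
    using g_dvd by (simp add: real_of_int_div)
  show thesis
  proof
    show "c \<in> int_lattice" "u \<in> int_lattice" by (simp_all add: c_def u_def int_lattice_def)
    have "c \<bullet> u = (\<Sum>j\<in>UNIV. of_int (v j * k j)) / of_int g"
      by (simp add: c_def u_def inner_vec_def k_div sum_divide_distrib mult.commute)
    also have "\<dots> = 1" using v \<open>g \<noteq> 0\<close> by (simp only: of_int_sum[symmetric]) simp
    finally show "c \<bullet> u = 1" .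
    show "real_of_int g \<noteq> 0" using \<open>g \<noteq> 0\<close> by simp
    show "a = real_of_int g *\<^sub>R c" using \<open>g \<noteq> 0\<close> by (simp add: vec_eq_iff c_def k_div a_k)
  qed
qed

lemma rational_hyperplane_primitive_normal:
  fixes V :: "(real^'n) set"
  assumes "rational_hyperplane V"
  obtains c u where "c \<in> int_lattice" "u \<in> int_lattice" "c \<bullet> u = 1" "V = {v. c \<bullet> v = 0}"
proof -
  obtain a where a: "a \<in> int_lattice" "a \<noteq> 0" "V = {v. a \<bullet> v = 0}"
    using rational_hyperplane_integer_normal[OF assms] .
  obtain c u d where "c \<in> int_lattice" "u \<in> int_lattice" "c \<bullet> u = 1" "d \<noteq> 0" "a = d *\<^sub>R c"
    using int_lattice_primitive[OF a(1,2)] .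
  moreover from this have "V = {v. c \<bullet> v = 0}" using a(3) by simp
  ultimately show thesis using that by blast
qed

section \<open>The quasitoric manifold and its orbit space\<close>

lemma qt_rel_texp_iff:
  "((p, texp a), (q, texp b)) \<in> qt_rel P lam \<longleftrightarrow>
     p \<in> P \<and> q = p \<and> (\<exists>w\<in>span (lam ` facets_at P p). texp a = texp (w + b))"
  by (auto simp: qt_rel_def Tface_def tmul_texp texp_in_torus)

lemma qt_rel_subset: "qt_rel P lam \<subseteq> (P \<times> (torus :: (complex^'n) set)) \<times> (P \<times> torus)"
  by (auto simp: qt_rel_def)

lemma qt_rel_texpE:
  assumes "(x, y) \<in> qt_rel P lam"
  obtains p a b where "x = (p, texp a)" "y = (p, texp b)"
proof -
  obtain p t s where "x = (p, t)" "y = (p, s)" "t \<in> torus" "s \<in> torus"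
    using assms by (auto simp: qt_rel_def)
  then show thesis using that by (metis torus_texpE)
qed

lemma equiv_qt_rel: "equiv (P \<times> (torus :: (complex^'n) set)) (qt_rel P lam)"
proof (rule equivI)
  let ?S = "\<lambda>p. span (lam ` facets_at P p)"
  show "refl_on (P \<times> torus) (qt_rel P lam)"
  proof (rule refl_onI)
    fix x assume "x \<in> P \<times> (torus :: (complex^'n) set)"
    then obtain p a where "x = (p, texp a)" "p \<in> P" by (metis SigmaE torus_texpE)
    then show "(x, x) \<in> qt_rel P lam" by (auto simp: qt_rel_texp_iff intro!: bexI[of _ 0] span_zero)
  qed
  show "sym (qt_rel P lam)"
  proof (rule symI)
    fix x y assume xy: "(x, y) \<in> qt_rel P lam"
    then obtain p a b where xy': "x = (p, texp a)" "y = (p, texp b)" by (rule qt_rel_texpE)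
    with xy obtain w where w: "p \<in> P" "w \<in> ?S p" "texp a = texp (w + b)"
      by (auto simp: qt_rel_texp_iff)
    then have "texp b = texp (- w + a)" using texp_add_cong[OF w(3), of "- w"] by simp
    then have "((p, texp b), (p, texp a)) \<in> qt_rel P lam"
      using w(1,2) unfolding qt_rel_texp_iff by (blast intro: span_neg)
    then show "(y, x) \<in> qt_rel P lam" using xy' by simp
  qed
  show "trans (qt_rel P lam)"
  proof (rule transI)
    fix x y z assume xy: "(x, y) \<in> qt_rel P lam" and yz: "(y, z) \<in> qt_rel P lam"
    then obtain p a b c where xyz: "x = (p, texp a)" "y = (p, texp b)" "z = (p, texp c)"
      by (metis qt_rel_texpE prod.inject)
    with xy yz obtain w w' where "p \<in> P" "w \<in> ?S p" "texp a = texp (w + b)"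
      "w' \<in> ?S p" "texp b = texp (w' + c)"
      by (auto simp: qt_rel_texp_iff)
    moreover from this have "texp a = texp ((w + w') + c)" by (metis texp_add_cong add.assoc)
    ultimately have "((p, texp a), (p, texp c)) \<in> qt_rel P lam"
      unfolding qt_rel_texp_iff by (blast intro: span_add)
    then show "(x, z) \<in> qt_rel P lam" using xyz by simp
  qed
qed (use qt_rel_subset in blast)

lemma qt_rel_class:
  assumes "p \<in> P"
  shows "qt_rel P lam `` {(p, texp a)} = (\<lambda>w. (p, texp (w + a))) ` span (lam ` facets_at P p)"
proof (intro equalityI subsetI)
  fix y assume y: "y \<in> qt_rel P lam `` {(p, texp a)}"
  then obtain b where "y = (p, texp b)" by (auto elim: qt_rel_texpE)
  with y obtain w where b: "y = (p, texp b)" "w \<in> span (lam ` facets_at P p)" "texp a = texp (w + b)"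
    by (auto simp: qt_rel_texp_iff)
  then have "texp b = texp (- w + a)" using texp_add_cong[OF b(3), of "- w"] by simp
  with b show "y \<in> (\<lambda>w. (p, texp (w + a))) ` span (lam ` facets_at P p)"
    by (auto intro!: image_eqI[of _ _ "- w"] span_neg)
next
  fix y assume "y \<in> (\<lambda>w. (p, texp (w + a))) ` span (lam ` facets_at P p)"
  then obtain w where "y = (p, texp (w + a))" "w \<in> span (lam ` facets_at P p)" by blast
  then show "y \<in> qt_rel P lam `` {(p, texp a)}"
    using assms by (auto simp: qt_rel_texp_iff span_neg intro!: bexI[of _ "- w"])
qed

lemma qt_act_class:
  assumes "p \<in> P"
  shows "qt_act (texp v) (qt_rel P lam `` {(p, texp a)}) = qt_rel P lam `` {(p, texp (v + a))}"
  using assms by (simp add: qt_rel_class qt_act_def image_image tmul_texp add_ac)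

lemma topspace_quasitoric:
  "topspace (quasitoric P lam) = (P \<times> (torus :: (complex^'n) set)) // qt_rel P lam"
proof -
  have "equiv (topspace (top_of_set (P \<times> (torus :: (complex^'n) set)))) (qt_rel P lam)"
    using equiv_qt_rel by simp
  from topspace_quotient_topology[OF this] show ?thesis
    by (simp add: quasitoric_def prod_topology_subtopology_eu)
qed

lemma quotient_map_quasitoric:
  "quotient_map (top_of_set (P \<times> (torus :: (complex^'n) set))) (quasitoric P lam) (\<lambda>x. qt_rel P lam `` {x})"
proof -
  have "equiv (topspace (top_of_set (P \<times> (torus :: (complex^'n) set)))) (qt_rel P lam)"
    using equiv_qt_rel by simp
  from quotient_map_quotient_topology[OF this] show ?thesis
    by (simp add: quasitoric_def prod_topology_subtopology_eu)
qed

lemma quasitoric_pointE: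
  assumes "x \<in> topspace (quasitoric P lam)"
  obtains p a where "p \<in> P" "x = qt_rel P lam `` {(p, texp a)}"
  using assms unfolding topspace_quasitoric quotient_def torus_eq_range_texp by auto

lemma qt_class_in_topspace: "p \<in> P \<Longrightarrow> qt_rel P lam `` {(p, texp a)} \<in> topspace (quasitoric P lam)"
  unfolding topspace_quasitoric quotient_def using texp_in_torus by blast

definition orbit_proj :: "(real^'n) set \<Rightarrow> ((real^'n) set \<Rightarrow> real^'n) \<Rightarrow> (real^'n) set
    \<Rightarrow> (real^'n) \<times> (complex^'n) \<Rightarrow> ((real^'n) \<times> (complex^'n)) set set" where
  "orbit_proj P lam V x = orbit_rel P lam (texp ` V) `` {qt_rel P lam `` {x}}"

context
  fixes V :: "(real^'n) set"
  assumes V: "subspace V"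
begin

lemma equiv_orbit_rel: "equiv (topspace (quasitoric P lam)) (orbit_rel P lam (texp ` V))"
proof (rule equivI)
  show "refl_on (topspace (quasitoric P lam)) (orbit_rel P lam (texp ` V))"
  proof (rule refl_onI)
    fix x assume x: "x \<in> topspace (quasitoric P lam)"
    then obtain p a where "p \<in> P" "x = qt_rel P lam `` {(p, texp a)}" by (rule quasitoric_pointE)
    then have "x = qt_act (texp 0) x" by (simp add: qt_act_class)
    then show "(x, x) \<in> orbit_rel P lam (texp ` V)"
      using x V by (auto simp: orbit_rel_def subspace_0)
  qed
  show "sym (orbit_rel P lam (texp ` V))"
  proof (rule symI)
    fix x y assume "(x, y) \<in> orbit_rel P lam (texp ` V)"
    then obtain v where v: "x \<in> topspace (quasitoric P lam)" "y \<in> topspace (quasitoric P lam)"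
      "v \<in> V" "y = qt_act (texp v) x"
      by (auto simp: orbit_rel_def)
    obtain p a where "p \<in> P" "x = qt_rel P lam `` {(p, texp a)}" using v(1) by (rule quasitoric_pointE)
    with v have "x = qt_act (texp (- v)) y" by (simp add: qt_act_class)
    then show "(y, x) \<in> orbit_rel P lam (texp ` V)"
      using v V by (auto simp: orbit_rel_def subspace_neg)
  qed
  show "trans (orbit_rel P lam (texp ` V))"
  proof (rule transI)
    fix x y z assume "(x, y) \<in> orbit_rel P lam (texp ` V)" "(y, z) \<in> orbit_rel P lam (texp ` V)"
    then obtain v w where v: "x \<in> topspace (quasitoric P lam)" "z \<in> topspace (quasitoric P lam)"
      "v \<in> V" "y = qt_act (texp v) x" "w \<in> V" "z = qt_act (texp w) y"
      by (auto simp: orbit_rel_def)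
    obtain p a where "p \<in> P" "x = qt_rel P lam `` {(p, texp a)}" using v(1) by (rule quasitoric_pointE)
    with v have "z = qt_act (texp (w + v)) x" by (simp add: qt_act_class add.assoc)
    then show "(x, z) \<in> orbit_rel P lam (texp ` V)"
      using v V by (auto simp: orbit_rel_def subspace_add)
  qed
qed (auto simp: orbit_rel_def)

lemma quotient_map_orbit_proj:
  "quotient_map (top_of_set (P \<times> (torus :: (complex^'n) set))) (orbit_space P lam (texp ` V))
     (orbit_proj P lam V)"
  using quotient_map_compose[OF quotient_map_quasitoric quotient_map_quotient_topology[OF equiv_orbit_rel]]
  by (simp add: orbit_space_def orbit_proj_def[abs_def] comp_def)

lemma orbit_proj_act:
  assumes "p \<in> P" "v \<in> V"
  shows "orbit_proj P lam V (p, texp (v + a)) = orbit_proj P lam V (p, texp a)"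
proof -
  have "(qt_rel P lam `` {(p, texp a)}, qt_rel P lam `` {(p, texp (v + a))}) \<in> orbit_rel P lam (texp ` V)"
    using assms qt_class_in_topspace[OF assms(1)] by (auto simp: orbit_rel_def qt_act_class)
  then show ?thesis unfolding orbit_proj_def by (metis equiv_class_eq[OF equiv_orbit_rel])
qed

lemma orbit_proj_isotropy:
  assumes "p \<in> P" "w \<in> span (lam ` facets_at P p)"
  shows "orbit_proj P lam V (p, texp (w + a)) = orbit_proj P lam V (p, texp a)"
proof -
  have "((p, texp (w + a)), (p, texp a)) \<in> qt_rel P lam"
    using assms by (auto simp: qt_rel_texp_iff)
  then show ?thesis by (simp add: orbit_proj_def equiv_class_eq[OF equiv_qt_rel])
qed

lemma orbit_proj_eqD:
  assumes "p \<in> P" "p' \<in> P" "orbit_proj P lam V (p, texp a) = orbit_proj P lam V (p', texp b)"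
  shows "p' = p \<and> (\<exists>v\<in>V. \<exists>w\<in>span (lam ` facets_at P p). texp b = texp (w + (v + a)))"
proof -
  have "(qt_rel P lam `` {(p, texp a)}, qt_rel P lam `` {(p', texp b)}) \<in> orbit_rel P lam (texp ` V)"
    using assms(3) unfolding orbit_proj_def
    by (rule eq_equiv_class[OF _ equiv_orbit_rel qt_class_in_topspace[OF assms(2)]])
  then obtain v where v: "v \<in> V" "qt_rel P lam `` {(p', texp b)} = qt_rel P lam `` {(p, texp (v + a))}"
    using assms(1) by (auto simp: orbit_rel_def qt_act_class)
  from v(2) have "((p', texp b), (p, texp (v + a))) \<in> qt_rel P lam"
    by (rule eq_equiv_class[OF _ equiv_qt_rel]) (use assms(1) texp_in_torus in auto)
  then show ?thesis using v(1) by (auto simp: qt_rel_texp_iff)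
qed

lemma orbit_space_pointE:
  assumes "W \<in> topspace (orbit_space P lam (texp ` V))"
  obtains p t where "p \<in> P" "t \<in> torus" "W = orbit_proj P lam V (p, t)"
proof -
  have "W \<in> orbit_proj P lam V ` (P \<times> torus)"
    using assms quotient_imp_surjective_map[OF quotient_map_orbit_proj] by simp
  then show thesis using that by auto
qed

lemma quotient_map_prod_interval_orbit_proj:
  "quotient_map (prod_topology (top_of_set {0..1::real}) (top_of_set (P \<times> (torus :: (complex^'n) set))))
     (prod_topology (top_of_set {0..1::real}) (orbit_space P lam (texp ` V)))
     (\<lambda>(s, x). (s, orbit_proj P lam V x))"
proof (rule quotient_map_prod_right[OF _ _ quotient_map_orbit_proj])
  show "locally_compact_space (top_of_set {0..1::real})"
    by (rule compact_imp_locally_compact_space, rule compact_space_subtopology) simp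
qed (simp add: Hausdorff_space_subtopology)

end

section \<open>The non-special part of the boundary\<close>

lemma Y_non_subset: "Y_non P lam V \<subseteq> P"
  unfolding Y_non_def by (auto dest: face_of_imp_subset)

lemma finite_non_special_faces:
  "polytope P \<Longrightarrow> finite {G. G face_of P \<and> G \<noteq> {} \<and> G \<noteq> P \<and> \<not> special_face P lam V G}"
  using finite_polytope_faces by (rule finite_subset[rotated]) auto

lemma closed_Y_non:
  assumes "polytope P"
  shows "closed (Y_non P lam V)"
  unfolding Y_non_def
  by (intro closed_Union finite_non_special_faces[OF assms])
    (auto intro: polytope_imp_closed face_of_polytope_polytope[OF assms])

lemma ANR_Y_non:
  assumes "polytope P"
  shows "ANR (Y_non P lam V)"
  unfolding Y_non_def
  by (intro ANR_finite_Union_convex_closed finite_non_special_faces[OF assms])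
    (auto intro: polytope_imp_closed face_of_polytope_polytope[OF assms] dest: face_of_imp_convex)

lemma isotropy_subset_off_Y_non:
  assumes "subspace V" "p \<notin> Y_non P lam V"
  shows "span (lam ` facets_at P p) \<subseteq> V"
proof (rule span_minimal[OF _ assms(1)], rule subsetI)
  fix x assume "x \<in> lam ` facets_at P p"
  then obtain F where F: "F facet_of P" "p \<in> F" "x = lam F" by (auto simp: facets_at_def)
  then have "F face_of P" "F \<noteq> {}" "F \<noteq> P" by (auto simp: facet_of_def)
  with F(2) assms(2) have "special_face P lam V F" by (auto simp: Y_non_def)
  with F show "x \<in> V" by (auto simp: special_face_def special_facet_def)
qed

lemma Y_non_decompose:
  assumes "\<And>F. F facet_of P \<Longrightarrow> lam F \<in> int_lattice" and "V = {v. c \<bullet> v = 0}"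
    and "p \<in> Y_non P lam V"
  shows "\<exists>v\<in>V. \<exists>w\<in>span (lam ` facets_at P p). x = v + w"
proof -
  obtain G F where "G face_of P" "p \<in> G" "F facet_of P" "G \<subseteq> F" "\<not> special_facet P lam V F"
    using assms(3) unfolding Y_non_def special_face_def by blast
  then have F: "F \<in> facets_at P p" "c \<bullet> lam F \<noteq> 0"
    using assms(1,2) by (auto simp: facets_at_def special_facet_def)
  define w where "w = ((c \<bullet> x) / (c \<bullet> lam F)) *\<^sub>R lam F"
  have "w \<in> span (lam ` facets_at P p)" unfolding w_def using F(1) by (intro span_mul span_base) auto
  moreover have "x - w \<in> V" using F(2) by (simp add: assms(2) w_def inner_diff_right)
  ultimately show ?thesis by (intro bexI[of _ "x - w"] bexI[of _ w]) auto
qed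

section \<open>Deforming a neighbourhood of a closed ANR\<close>

lemma ANR_retraction_near_setdist:
  fixes P Y :: "'a::euclidean_space set"
  assumes "compact P" "closed Y" "Y \<subseteq> P" "ANR Y" "Y \<noteq> {}"
  obtains \<epsilon> r where "\<epsilon> > 0" "continuous_on {p \<in> P. setdist {p} Y < \<epsilon>} r"
    "r ` {p \<in> P. setdist {p} Y < \<epsilon>} \<subseteq> Y" "\<And>y. y \<in> Y \<Longrightarrow> r y = y"
proof -
  have "closedin (top_of_set P) Y" using assms(2,3) by (simp add: closed_subset)
  then obtain U where U: "openin (top_of_set P) U" "Y retract_of U"
    using ANR_imp_neighbourhood_retract[OF assms(4)] by blast
  then obtain r where r: "Y \<subseteq> U" "continuous_on U r" "r ` U \<subseteq> Y" "\<And>y. y \<in> Y \<Longrightarrow> r y = y"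
    by (auto simp: retract_of_def retraction_def)
  obtain \<epsilon> where "\<epsilon> > 0" and \<epsilon>: "{p \<in> P. setdist {p} Y < \<epsilon>} \<subseteq> U"
  proof (cases "P - U = {}")
    case True
    then show thesis using that[of 1] by auto
  next
    case False
    obtain W where "open W" "U = P \<inter> W" using U(1) by (auto simp: openin_open)
    then have "P - U = P - W" by blast
    with \<open>open W\<close> have "closed (P - U)" using assms(1) by (simp add: closed_Diff compact_imp_closed)
    then have "0 < setdist Y (P - U)"
      using setdist_gt_0_compact_closed[of Y "P - U"] assms(1-3,5) False r(1)
      by (auto intro: compact_Int_closed[of P Y, simplified Int_absorb1[OF assms(3)]])
    moreover have "p \<in> U" if "p \<in> P" "setdist {p} Y < setdist Y (P - U)" for p
      using that setdist_subset_left[of "{p}" "P - U" Y] by (force simp: setdist_sym)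
    ultimately show thesis using that by blast
  qed
  then show thesis
    using that[of \<epsilon> r] continuous_on_subset[OF r(2) \<epsilon>] r(3,4) \<epsilon> by blast
qed

lemma continuous_on_cutoff_homotopy:
  fixes \<rho> \<mu> :: "'a::real_normed_vector \<Rightarrow> real" and r :: "'a \<Rightarrow> 'a"
  assumes "continuous_on S \<rho>" "continuous_on S \<mu>" "continuous_on {p \<in> S. \<rho> p < \<epsilon>} r" "\<epsilon> > 0"
    and "\<And>p. \<rho> p = \<epsilon> / 2 \<Longrightarrow> \<mu> p = 0"
  shows "continuous_on ({0..1::real} \<times> S) (\<lambda>x. if \<rho> (snd x) \<le> \<epsilon> / 2
      then (1 - fst x * \<mu> (snd x)) *\<^sub>R snd x + (fst x * \<mu> (snd x)) *\<^sub>R r (snd x) else snd x)"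
proof (rule continuous_on_cases_le)
  have "continuous_on {x \<in> {0..1::real} \<times> S. \<rho> (snd x) \<le> \<epsilon> / 2} (\<lambda>x. r (snd x))"
    using assms(4) by (intro continuous_on_compose2[OF assms(3)]) (auto intro!: continuous_intros)
  moreover have "continuous_on {x \<in> {0..1::real} \<times> S. \<rho> (snd x) \<le> \<epsilon> / 2} (\<lambda>x. \<mu> (snd x))"
    by (rule continuous_on_compose2[OF assms(2)]) (auto intro!: continuous_intros)
  ultimately show "continuous_on {x \<in> {0..1} \<times> S. \<rho> (snd x) \<le> \<epsilon> / 2}
      (\<lambda>x. (1 - fst x * \<mu> (snd x)) *\<^sub>R snd x + (fst x * \<mu> (snd x)) *\<^sub>R r (snd x))"
    by (intro continuous_intros)
  show "continuous_on ({0..1} \<times> S) (\<lambda>x. \<rho> (snd x))"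
    by (rule continuous_on_compose2[OF assms(1)]) (auto intro!: continuous_intros)
qed (use assms(5) in \<open>auto intro!: continuous_intros\<close>)

lemma ANR_deformation_near:
  fixes P Y :: "'a::euclidean_space set"
  assumes P: "compact P" "convex P" and Y: "closed Y" "Y \<subseteq> P" "ANR Y" "Y \<noteq> {}"
  obtains \<delta> H where "\<delta> > 0" "continuous_on ({0..1::real} \<times> P) H" "H ` ({0..1} \<times> P) \<subseteq> P"
    "\<And>p. H (0, p) = p" "\<And>s y. y \<in> Y \<Longrightarrow> H (s, y) = y"
    "\<And>p. p \<in> P \<Longrightarrow> setdist {p} Y < \<delta> \<Longrightarrow> H (1, p) \<in> Y"
proof -
  obtain \<epsilon> r where \<epsilon>: "\<epsilon> > 0" and r: "continuous_on {p \<in> P. setdist {p} Y < \<epsilon>} r"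
    "r ` {p \<in> P. setdist {p} Y < \<epsilon>} \<subseteq> Y" "\<And>y. y \<in> Y \<Longrightarrow> r y = y"
    using ANR_retraction_near_setdist[OF P(1) Y] by blast
  define \<rho> where "\<rho> p = setdist {p} Y" for p
  \<comment> \<open>\<mu> is 1 within \<epsilon>/4 of Y and 0 from \<epsilon>/2 on, so H only uses r where it is defined
    and is continuous across \<rho> = \<epsilon>/2.\<close>
  define \<mu> where "\<mu> p = max 0 (min 1 (2 - 4 * \<rho> p / \<epsilon>))" for p
  define H where "H x = (if \<rho> (snd x) \<le> \<epsilon> / 2
      then (1 - fst x * \<mu> (snd x)) *\<^sub>R snd x + (fst x * \<mu> (snd x)) *\<^sub>R r (snd x) else snd x)" for x
  have \<rho>_cont: "continuous_on S \<rho>" for S unfolding \<rho>_def by (rule continuous_on_setdist)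
  have \<mu>_1: "\<mu> p = 1" if "\<rho> p \<le> \<epsilon> / 4" for p using that \<epsilon> by (auto simp: \<mu>_def field_simps)
  show thesis
  proof
    show "\<epsilon> / 4 > 0" using \<epsilon> by simp
    show "continuous_on ({0..1} \<times> P) H"
      unfolding H_def using \<epsilon> r(1)
    proof (intro continuous_on_cutoff_homotopy \<rho>_cont)
      show "continuous_on P \<mu>" unfolding \<mu>_def using \<epsilon> by (intro continuous_intros \<rho>_cont) auto
      show "\<mu> p = 0" if "\<rho> p = \<epsilon> / 2" for p
      proof -
        have "4 * \<rho> p / \<epsilon> = 2" using that \<epsilon> by (simp add: field_simps)
        then show ?thesis by (simp add: \<mu>_def)
      qed
    qed (simp_all add: \<rho>_def)
    show "H ` ({0..1} \<times> P) \<subseteq> P"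
    proof clarify
      fix s p assume s: "s \<in> {0..1::real}" and p: "p \<in> P"
      show "H (s, p) \<in> P"
      proof (cases "\<rho> p \<le> \<epsilon> / 2")
        case True
        then have "r p \<in> P" using r(2) Y(2) p \<epsilon> by (force simp: \<rho>_def)
        moreover have "0 \<le> s * \<mu> p" "s * \<mu> p \<le> 1" using s by (auto simp: \<mu>_def mult_le_one)
        ultimately show ?thesis using True p P(2) by (simp add: H_def convex_alt)
      qed (simp add: H_def p)
    qed
    show "H (0, p) = p" for p by (simp add: H_def)
    show "H (s, y) = y" if "y \<in> Y" for s y
      using that \<mu>_1[of y] \<epsilon> r(3) by (simp add: H_def \<rho>_def setdist_eq_0I algebra_simps)
    show "H (1, p) \<in> Y" if "p \<in> P" "setdist {p} Y < \<epsilon> / 4" for p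
    proof -
      have "r p \<in> Y" using r(2) that \<epsilon> by auto
      then show ?thesis using that(2) \<mu>_1 \<epsilon> by (simp add: H_def \<rho>_def)
    qed
  qed
qed

lemma ANR_deformation_cutoff:
  fixes P Y :: "'a::euclidean_space set"
  assumes P: "compact P" "convex P" and Y: "closed Y" "Y \<subseteq> P" "ANR Y"
  obtains H \<sigma> where "continuous_on ({0..1::real} \<times> P) H" "H ` ({0..1} \<times> P) \<subseteq> P"
    "\<And>p. H (0, p) = p" "\<And>s y. s \<in> {0..1} \<Longrightarrow> y \<in> Y \<Longrightarrow> H (s, y) = y"
    "continuous_on P (\<sigma> :: 'a \<Rightarrow> real)" "\<And>p. p \<in> P \<Longrightarrow> 0 \<le> \<sigma> p \<and> \<sigma> p \<le> 1"
    "\<And>y. y \<in> Y \<Longrightarrow> \<sigma> y = 0" "\<And>p. p \<in> P \<Longrightarrow> \<sigma> p < 1 \<Longrightarrow> H (1, p) \<in> Y"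
proof (cases "Y = {}")
  case True
  show thesis by (rule that[of snd "\<lambda>p. 1"]) (auto simp: True intro: continuous_intros)
next
  case False
  obtain \<delta> H where \<delta>: "\<delta> > 0" and H: "continuous_on ({0..1::real} \<times> P) H" "H ` ({0..1} \<times> P) \<subseteq> P"
    "\<And>p. H (0, p) = p" "\<And>s y. y \<in> Y \<Longrightarrow> H (s, y) = y"
    "\<And>p. p \<in> P \<Longrightarrow> setdist {p} Y < \<delta> \<Longrightarrow> H (1, p) \<in> Y"
    using ANR_deformation_near[OF P Y False] by blast
  show thesis
  proof (rule that[OF H(1-3), of "\<lambda>p. min 1 (setdist {p} Y / \<delta>)"])
    show "continuous_on P (\<lambda>p. min 1 (setdist {p} Y / \<delta>))"
      using \<delta> by (intro continuous_intros continuous_on_setdist) auto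
    show "H (1, p) \<in> Y" if "p \<in> P" "min 1 (setdist {p} Y / \<delta>) < 1" for p
    proof (rule H(5)[OF that(1)])
      show "setdist {p} Y < \<delta>" using that(2) \<delta> by (auto simp: min_def field_simps split: if_splits)
    qed
  qed (use \<delta> H(4) in \<open>auto simp: setdist_pos_le setdist_eq_0I\<close>)
qed

context
  fixes P :: "(real^'n) set" and lam :: "(real^'n) set \<Rightarrow> real^'n" and V :: "(real^'n) set"
    and c u :: "real^'n"
  assumes P: "polytope P" and lam_int: "\<And>F. F facet_of P \<Longrightarrow> lam F \<in> int_lattice"
    and V_eq: "V = {v. c \<bullet> v = 0}" and c_int: "c \<in> int_lattice" and u_int: "u \<in> int_lattice"
    and c_u: "c \<bullet> u = 1"
begin

lemma subspace_V: "subspace V"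
  unfolding V_eq by (rule subspace_hyperplane)

lemma orbit_proj_const_on_Y_non:
  assumes "p \<in> Y_non P lam V" "t \<in> torus" "t' \<in> torus"
  shows "orbit_proj P lam V (p, t) = orbit_proj P lam V (p, t')"
proof -
  obtain a b where ab: "t = texp a" "t' = texp b" using assms(2,3) by (elim torus_texpE)
  obtain v w where vw: "v \<in> V" "w \<in> span (lam ` facets_at P p)" "b - a = v + w"
    using Y_non_decompose[OF lam_int V_eq assms(1)] by blast
  have p: "p \<in> P" using assms(1) Y_non_subset by blast
  have "orbit_proj P lam V (p, texp b) = orbit_proj P lam V (p, texp (w + (v + a)))"
    using vw(3) by (simp add: algebra_simps)
  also have "\<dots> = orbit_proj P lam V (p, texp a)"
    using orbit_proj_isotropy[OF subspace_V p vw(2)] orbit_proj_act[OF subspace_V p vw(1)] by simp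
  finally show ?thesis using ab by simp
qed

lemma orbit_proj_eq_off_Y_non:
  assumes "p \<in> P" "p' \<in> P" "p \<notin> Y_non P lam V"
    and "orbit_proj P lam V (p, texp a) = orbit_proj P lam V (p', texp b)"
  shows "p' = p \<and> (\<exists>v\<in>V. texp b = texp (v + a))"
proof -
  obtain v w where vw: "p' = p" "v \<in> V" "w \<in> span (lam ` facets_at P p)" "texp b = texp (w + (v + a))"
    using orbit_proj_eqD[OF subspace_V assms(1,2,4)] by blast
  have "w + v \<in> V"
    using vw(2,3) isotropy_subset_off_Y_non[OF subspace_V assms(3)] subspace_add[OF subspace_V] by blast
  moreover have "texp b = texp ((w + v) + a)" using vw(4) by (simp add: add.assoc)
  ultimately show ?thesis using vw(1) by blast
qed

lemma character_texp_add_V: "v \<in> V \<Longrightarrow> character c (texp (v + a)) = character c (texp a)"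
  using c_int by (simp add: character_texp V_eq inner_add_right)

lemma orbit_proj_cocharacter_character:
  assumes "p \<in> P" "t \<in> torus"
  shows "orbit_proj P lam V (p, cocharacter u (character c t)) = orbit_proj P lam V (p, t)"
proof -
  obtain a where a: "t = texp a" using assms(2) by (rule torus_texpE)
  have "(c \<bullet> a) *\<^sub>R u - a \<in> V" using c_u by (simp add: V_eq inner_diff_right)
  then have "orbit_proj P lam V (p, texp (((c \<bullet> a) *\<^sub>R u - a) + a)) = orbit_proj P lam V (p, texp a)"
    by (rule orbit_proj_act[OF subspace_V assms(1)])
  then show ?thesis using a c_int u_int by (simp add: character_texp cocharacter_cis)
qed

lemma closed_Z_non_parts:
  "closed (P \<times> sphere (0::complex) 1)" "closed (Y_non P lam V \<times> cball (0::complex) 1)"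
  by (intro closed_Times closed_sphere closed_cball closed_Y_non[OF P]
      compact_imp_closed[OF polytope_imp_compact[OF P]])+

lemma continuous_map_orbit_proj:
  assumes "continuous_on S k" "k ` S \<subseteq> P \<times> torus"
  shows "continuous_map (top_of_set S) (orbit_space P lam (texp ` V)) (\<lambda>x. orbit_proj P lam V (k x))"
proof -
  have "continuous_map (top_of_set S) (top_of_set (P \<times> torus)) k"
    using assms by (auto simp: continuous_map_subtopology_eu)
  from continuous_map_compose[OF this quotient_imp_continuous_map[OF quotient_map_orbit_proj[OF subspace_V]]]
  show ?thesis by (simp add: comp_def)
qed

definition Z_to_Q :: "(real^'n) \<times> complex \<Rightarrow> ((real^'n) \<times> (complex^'n)) set set" where
  "Z_to_Q x = (if snd x \<in> sphere 0 1 then orbit_proj P lam V (fst x, cocharacter u (snd x))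
     else orbit_proj P lam V (fst x, texp 0))"

lemma continuous_map_Z_to_Q:
  "continuous_map (top_of_set (Z_non P lam V)) (orbit_space P lam (texp ` V)) Z_to_Q"
  unfolding Z_to_Q_def Z_non_def Un_commute[of "Y_non P lam V \<times> cball 0 1"]
proof (rule continuous_map_cases_closed[OF closed_Z_non_parts])
  have "continuous_on (P \<times> sphere 0 1) (\<lambda>x. (fst x, cocharacter u (snd x)))"
    by (intro continuous_intros continuous_on_compose2[OF continuous_on_cocharacter]) auto
  then show "continuous_map (top_of_set (P \<times> sphere 0 1)) (orbit_space P lam (texp ` V))
      (\<lambda>x. orbit_proj P lam V (fst x, cocharacter u (snd x)))"
    using cocharacter_in_torus[OF u_int] by (intro continuous_map_orbit_proj) auto
  show "continuous_map (top_of_set (Y_non P lam V \<times> cball 0 1)) (orbit_space P lam (texp ` V))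
      (\<lambda>x. orbit_proj P lam V (fst x, texp 0))"
    using Y_non_subset[of P lam V] texp_in_torus
    by (intro continuous_map_orbit_proj) (auto intro!: continuous_intros)
  fix x :: "(real^'n) \<times> complex"
  assume "x \<in> P \<times> sphere 0 1 \<and> snd x \<notin> sphere 0 1 \<or> x \<in> Y_non P lam V \<times> cball 0 1 \<and> snd x \<in> sphere 0 1"
  then have "fst x \<in> Y_non P lam V" "snd x \<in> sphere 0 1" by auto
  then show "orbit_proj P lam V (fst x, cocharacter u (snd x)) = orbit_proj P lam V (fst x, texp 0)"
    by (intro orbit_proj_const_on_Y_non cocharacter_in_torus[OF u_int] texp_in_torus)
qed

lemma continuous_on_Z_non_cases:
  assumes "continuous_on ({0..1::real} \<times> (P \<times> sphere 0 1)) f"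
    and "continuous_on ({0..1} \<times> (Y_non P lam V \<times> cball 0 1)) g"
    and "\<And>s y w. s \<in> {0..1} \<Longrightarrow> y \<in> Y_non P lam V \<Longrightarrow> w \<in> sphere 0 1 \<Longrightarrow> f (s, y, w) = g (s, y, w)"
  shows "continuous_on ({0..1} \<times> Z_non P lam V) (\<lambda>x. if snd (snd x) \<in> sphere 0 1 then f x else g x)"
proof -
  let ?S = "{0..1::real} \<times> (P \<times> sphere (0::complex) 1)" and ?T = "{0..1::real} \<times> (Y_non P lam V \<times> cball 0 1)"
  have "closedin (top_of_set (?S \<union> ?T)) ?S" "closedin (top_of_set (?S \<union> ?T)) ?T"
    by (auto intro!: closed_subset closed_Times closed_Z_non_parts)
  then have "continuous_on (?S \<union> ?T) (\<lambda>x. if snd (snd x) \<in> sphere 0 1 then f x else g x)"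
    by (rule continuous_on_cases_local[OF _ _ assms(1,2)]) (auto intro: assms(3))
  moreover have "?S \<union> ?T = {0..1} \<times> Z_non P lam V" by (auto simp: Z_non_def)
  ultimately show ?thesis by simp
qed

context
  fixes H :: "real \<times> (real^'n) \<Rightarrow> real^'n" and \<sigma> :: "real^'n \<Rightarrow> real"
  assumes H_cont: "continuous_on ({0..1} \<times> P) H" and H_P: "H ` ({0..1} \<times> P) \<subseteq> P"
    and H_0: "\<And>p. H (0, p) = p" and H_Y: "\<And>s y. s \<in> {0..1} \<Longrightarrow> y \<in> Y_non P lam V \<Longrightarrow> H (s, y) = y"
    and \<sigma>_cont: "continuous_on P \<sigma>" and \<sigma>_01: "\<And>p. p \<in> P \<Longrightarrow> 0 \<le> \<sigma> p \<and> \<sigma> p \<le> 1"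
    and \<sigma>_Y: "\<And>y. y \<in> Y_non P lam V \<Longrightarrow> \<sigma> y = 0"
    and \<sigma>_less_1: "\<And>p. p \<in> P \<Longrightarrow> \<sigma> p < 1 \<Longrightarrow> H (1, p) \<in> Y_non P lam V"
begin

definition PT_to_Z :: "(real^'n) \<times> (complex^'n) \<Rightarrow> (real^'n) \<times> complex" where
  "PT_to_Z x = (H (1, fst x), complex_of_real (\<sigma> (fst x)) * character c (snd x))"

lemma H_1_in_P: "p \<in> P \<Longrightarrow> H (1, p) \<in> P"
  using H_P by auto

lemma H_1_Y_non: "y \<in> Y_non P lam V \<Longrightarrow> H (1, y) = y"
  using H_Y by simp

lemma continuous_on_H_1: "continuous_on S k \<Longrightarrow> k ` S \<subseteq> P \<Longrightarrow> continuous_on S (\<lambda>x. H (1, k x))"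
  by (rule continuous_on_compose2[OF H_cont, where f = "\<lambda>x. (1, k x)"]) (auto intro!: continuous_intros)

lemma continuous_map_PT_to_Z:
  "continuous_map (top_of_set (P \<times> torus)) (top_of_set (Z_non P lam V)) PT_to_Z"
  unfolding continuous_map_subtopology_eu
proof
  have "continuous_on (P \<times> torus) (\<lambda>x. \<sigma> (fst x))"
    by (rule continuous_on_compose2[OF \<sigma>_cont]) (auto intro!: continuous_intros)
  moreover have "continuous_on (P \<times> torus) (\<lambda>x. character c (snd x))"
    by (rule continuous_on_compose2[OF continuous_on_character]) (auto intro!: continuous_intros)
  ultimately show "continuous_on (P \<times> torus) PT_to_Z"
    unfolding PT_to_Z_def by (intro continuous_intros continuous_on_H_1) auto
  show "PT_to_Z \<in> P \<times> torus \<rightarrow> Z_non P lam V"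
  proof clarify
    fix p t assume p: "p \<in> P" and t: "t \<in> (torus :: (complex^'n) set)"
    have n: "norm (character c t) = 1" using character_in_sphere[OF c_int t] by simp
    show "PT_to_Z (p, t) \<in> Z_non P lam V"
    proof (cases "\<sigma> p < 1")
      case True
      then have "H (1, p) \<in> Y_non P lam V" using \<sigma>_less_1 p by blast
      moreover have "norm (complex_of_real (\<sigma> p) * character c t) \<le> 1"
        using \<sigma>_01[OF p] n by (simp add: norm_mult)
      ultimately show ?thesis by (simp add: PT_to_Z_def Z_non_def)
    next
      case False
      then have "\<sigma> p = 1" using \<sigma>_01[OF p] by simp
      then show ?thesis using H_1_in_P[OF p] n by (simp add: PT_to_Z_def Z_non_def)
    qed
  qed
qed

lemma PT_to_Z_orbit_invariant:
  assumes "x \<in> P \<times> torus" "y \<in> P \<times> torus" "orbit_proj P lam V x = orbit_proj P lam V y"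
  shows "PT_to_Z x = PT_to_Z y"
proof -
  obtain p a p' b where xy: "x = (p, texp a)" "y = (p', texp b)" "p \<in> P" "p' \<in> P"
    using assms(1,2) by (metis SigmaE torus_texpE)
  show ?thesis
  proof (cases "p \<in> Y_non P lam V")
    case True
    moreover have "p' = p" using orbit_proj_eqD[OF subspace_V xy(3,4)] assms(3) xy by blast
    ultimately show ?thesis using xy by (simp add: PT_to_Z_def \<sigma>_Y)
  next
    case False
    then obtain v where "p' = p" "v \<in> V" "texp b = texp (v + a)"
      using orbit_proj_eq_off_Y_non[OF xy(3,4)] assms(3) xy by blast
    then show ?thesis using xy by (simp add: PT_to_Z_def character_texp_add_V)
  qed
qed

lemma Z_to_Q_PT_to_Z:
  assumes "p \<in> P" "t \<in> torus"
  shows "Z_to_Q (PT_to_Z (p, t)) = orbit_proj P lam V (H (1, p), t)"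
proof (cases "\<sigma> p < 1")
  case True
  then have Y: "H (1, p) \<in> Y_non P lam V" using \<sigma>_less_1 assms(1) by blast
  have "cocharacter u (complex_of_real (\<sigma> p) * character c t) \<in> torus \<or>
      complex_of_real (\<sigma> p) * character c t \<notin> sphere 0 1"
    using cocharacter_in_torus[OF u_int] by blast
  then show ?thesis
    using orbit_proj_const_on_Y_non[OF Y _ assms(2)] texp_in_torus
    by (auto simp: Z_to_Q_def PT_to_Z_def)
next
  case False
  then have "\<sigma> p = 1" using \<sigma>_01[OF assms(1)] by simp
  moreover have "character c t \<in> sphere 0 1" using character_in_sphere[OF c_int assms(2)] .
  ultimately show ?thesis
    using orbit_proj_cocharacter_character[OF H_1_in_P[OF assms(1)] assms(2)]
    by (simp add: Z_to_Q_def PT_to_Z_def)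
qed

lemma orbit_proj_H_invariant:
  assumes "s \<in> {0..1}" "x \<in> P \<times> torus" "y \<in> P \<times> torus" "orbit_proj P lam V x = orbit_proj P lam V y"
  shows "orbit_proj P lam V (H (s, fst x), snd x) = orbit_proj P lam V (H (s, fst y), snd y)"
proof -
  obtain p a p' b where xy: "x = (p, texp a)" "y = (p', texp b)" "p \<in> P" "p' \<in> P"
    using assms(2,3) by (metis SigmaE torus_texpE)
  show ?thesis
  proof (cases "p \<in> Y_non P lam V")
    case True
    moreover have "p' = p" using orbit_proj_eqD[OF subspace_V xy(3,4)] assms(4) xy by blast
    ultimately show ?thesis using xy assms(1,4) H_Y by simp
  next
    case False
    then obtain v where "p' = p" "v \<in> V" "texp b = texp (v + a)"
      using orbit_proj_eq_off_Y_non[OF xy(3,4)] assms(4) xy by blast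
    moreover have "H (s, p) \<in> P" using H_P assms(1) xy(3) by blast
    ultimately show ?thesis using xy orbit_proj_act[OF subspace_V] by simp
  qed
qed

lemma orbit_space_deformation:
  obtains L where "continuous_map (prod_topology (top_of_set {0..1::real}) (orbit_space P lam (texp ` V)))
      (orbit_space P lam (texp ` V)) L"
    "\<And>s p t. s \<in> {0..1} \<Longrightarrow> p \<in> P \<Longrightarrow> t \<in> torus \<Longrightarrow>
      L (s, orbit_proj P lam V (p, t)) = orbit_proj P lam V (H (s, p), t)"
proof -
  let ?X = "prod_topology (top_of_set {0..1::real}) (top_of_set (P \<times> (torus :: (complex^'n) set)))"
  have X: "?X = top_of_set ({0..1} \<times> (P \<times> torus))" by (simp add: prod_topology_subtopology_eu)
  define D where "D x = orbit_proj P lam V (H (fst x, fst (snd x)), snd (snd x))"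
    for x :: "real \<times> (real^'n) \<times> (complex^'n)"
  have D_cont: "continuous_map ?X (orbit_space P lam (texp ` V)) D"
    unfolding X D_def using H_P
    by (intro continuous_map_orbit_proj continuous_intros
        continuous_on_compose2[OF H_cont, where f = "\<lambda>x. (fst x, fst (snd x))"]) auto
  have D_inv: "D x = D y"
    if "x \<in> topspace ?X" "y \<in> topspace ?X"
      "(\<lambda>(s, x). (s, orbit_proj P lam V x)) x = (\<lambda>(s, x). (s, orbit_proj P lam V x)) y"
    for x y
  proof -
    obtain s p t s' p' t' where "x = (s, p, t)" "y = (s', p', t')" by (metis prod.exhaust)
    then show ?thesis using that orbit_proj_H_invariant[of s "(p, t)" "(p', t')"] by (simp add: X D_def)
  qed
  obtain L where L: "continuous_map (prod_topology (top_of_set {0..1}) (orbit_space P lam (texp ` V)))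
      (orbit_space P lam (texp ` V)) L"
    "L ` topspace (prod_topology (top_of_set {0..1}) (orbit_space P lam (texp ` V))) = D ` topspace ?X"
    "\<And>x. x \<in> topspace ?X \<Longrightarrow> L ((\<lambda>(s, x). (s, orbit_proj P lam V x)) x) = D x"
    by (rule quotient_map_lift_exists[OF quotient_map_prod_interval_orbit_proj[OF subspace_V] D_cont D_inv])
      (auto intro: that)
  show thesis
  proof (rule that[OF L(1)])
    fix s p t assume "s \<in> {0..1::real}" "p \<in> P" "t \<in> (torus :: (complex^'n) set)"
    then show "L (s, orbit_proj P lam V (p, t)) = orbit_proj P lam V (H (s, p), t)"
      using L(3)[of "(s, p, t)"] by (simp add: X D_def)
  qed
qed

definition Z_deform :: "(real^'n) \<times> complex \<Rightarrow> (real^'n) \<times> complex" where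
  "Z_deform x = (if snd x \<in> sphere 0 1 then (H (1, fst x), snd x) else x)"

lemma homotopic_Z_deform_id:
  "homotopic_with (\<lambda>x. True) (top_of_set (Z_non P lam V)) (top_of_set (Z_non P lam V)) Z_deform id"
proof (rule homotopic_with_by_homotopy_on)
  define K where "K x = (if snd (snd x) \<in> sphere 0 1
      then (H (1 - fst x, fst (snd x)), snd (snd x)) else snd x)" for x :: "real \<times> (real^'n) \<times> complex"
  show "continuous_on ({0..1} \<times> Z_non P lam V) K"
    unfolding K_def
  proof (rule continuous_on_Z_non_cases)
    show "continuous_on ({0..1} \<times> (P \<times> sphere 0 1)) (\<lambda>x. (H (1 - fst x, fst (snd x)), snd (snd x)))"
      by (intro continuous_intros continuous_on_compose2[OF H_cont, where f = "\<lambda>x. (1 - fst x, fst (snd x))"])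
        auto
  qed (auto intro!: continuous_intros simp: H_Y)
  have "K (s, p, w) \<in> Z_non P lam V" if s: "s \<in> {0..1::real}" and pw: "(p, w) \<in> Z_non P lam V" for s p w
  proof (cases "w \<in> sphere 0 1")
    case True
    then have "p \<in> P" using pw Y_non_subset by (auto simp: Z_non_def)
    then have "H (1 - s, p) \<in> P" using H_P s by auto
    then show ?thesis using True by (simp add: K_def Z_non_def)
  qed (use pw in \<open>simp add: K_def\<close>)
  then show "K ` ({0..1} \<times> Z_non P lam V) \<subseteq> Z_non P lam V" by auto
  show "K (0, x) = Z_deform x" "K (1, x) = id x" for x
    by (simp_all add: K_def Z_deform_def H_0)
qed

definition Z_rescale :: "real \<times> (real^'n) \<times> complex \<Rightarrow> (real^'n) \<times> complex" where
  "Z_rescale x = (if snd (snd x) \<in> sphere 0 1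
      then (H (1, fst (snd x)), complex_of_real ((1 - fst x) * \<sigma> (fst (snd x)) + fst x) * snd (snd x))
      else (fst (snd x), complex_of_real (fst x) * snd (snd x)))"

lemma continuous_on_Z_rescale: "continuous_on ({0..1} \<times> Z_non P lam V) Z_rescale"
  unfolding Z_rescale_def
proof (rule continuous_on_Z_non_cases)
  have "continuous_on ({0..1::real} \<times> (P \<times> sphere 0 1)) (\<lambda>x. \<sigma> (fst (snd x)))"
    by (rule continuous_on_compose2[OF \<sigma>_cont]) (auto intro!: continuous_intros)
  then show "continuous_on ({0..1} \<times> (P \<times> sphere 0 1)) (\<lambda>x. (H (1, fst (snd x)),
      complex_of_real ((1 - fst x) * \<sigma> (fst (snd x)) + fst x) * snd (snd x)))"
    by (intro continuous_intros continuous_on_H_1) auto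
qed (auto intro!: continuous_intros simp: H_1_Y_non \<sigma>_Y)

lemma Z_rescale_in_Z_non:
  assumes s: "s \<in> {0..1}" and pw: "(p, w) \<in> Z_non P lam V"
  shows "Z_rescale (s, p, w) \<in> Z_non P lam V"
proof (cases "w \<in> sphere 0 1")
  case True
  then have p: "p \<in> P" using pw Y_non_subset by (auto simp: Z_non_def)
  define k where "k = (1 - s) * \<sigma> p + s"
  have "0 \<le> s * (1 - \<sigma> p)" "0 \<le> (1 - s) * (1 - \<sigma> p)" using s \<sigma>_01[OF p] by auto
  then have k: "\<sigma> p \<le> k" "k \<le> 1" by (auto simp: k_def algebra_simps)
  show ?thesis
  proof (cases "k = 1")
    case True
    then show ?thesis
      using \<open>w \<in> sphere 0 1\<close> H_1_in_P[OF p] by (simp add: Z_rescale_def k_def[symmetric] Z_non_def)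
  next
    case False
    then have "H (1, p) \<in> Y_non P lam V" using k \<sigma>_less_1[OF p] by simp
    moreover have "norm (complex_of_real k * w) \<le> 1"
      using \<open>w \<in> sphere 0 1\<close> k \<sigma>_01[OF p] by (simp add: norm_mult)
    ultimately show ?thesis using \<open>w \<in> sphere 0 1\<close> by (simp add: Z_rescale_def k_def[symmetric] Z_non_def)
  qed
next
  case False
  then have "p \<in> Y_non P lam V" "norm w \<le> 1" using pw by (auto simp: Z_non_def)
  moreover have "norm (complex_of_real s * w) \<le> 1" using s \<open>norm w \<le> 1\<close> by (simp add: norm_mult mult_le_one)
  ultimately show ?thesis using False by (simp add: Z_rescale_def Z_non_def)
qed

context
  fixes g :: "((real^'n) \<times> (complex^'n)) set set \<Rightarrow> (real^'n) \<times> complex"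
  assumes g_orbit_proj: "\<And>x. x \<in> P \<times> torus \<Longrightarrow> g (orbit_proj P lam V x) = PT_to_Z x"
begin

lemma homotopic_g_Z_to_Q_Z_deform:
  "homotopic_with (\<lambda>x. True) (top_of_set (Z_non P lam V)) (top_of_set (Z_non P lam V)) (g \<circ> Z_to_Q) Z_deform"
proof (rule homotopic_with_by_homotopy_on[OF continuous_on_Z_rescale])
  show "Z_rescale ` ({0..1} \<times> Z_non P lam V) \<subseteq> Z_non P lam V"
    using Z_rescale_in_Z_non by auto
  show "Z_rescale (0, x) = (g \<circ> Z_to_Q) x" if "x \<in> Z_non P lam V" for x
  proof -
    obtain p w where x: "x = (p, w)" by fastforce
    show ?thesis
    proof (cases "w \<in> sphere 0 1")
      case True
      then have "(p, cocharacter u w) \<in> P \<times> torus"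
        using that x Y_non_subset cocharacter_in_torus[OF u_int] by (auto simp: Z_non_def)
      then show ?thesis
        using True x
        by (simp add: Z_to_Q_def g_orbit_proj PT_to_Z_def Z_rescale_def
            character_cocharacter[OF c_int u_int c_u])
    next
      case False
      then have "p \<in> Y_non P lam V" using that x by (auto simp: Z_non_def)
      moreover from this have "g (orbit_proj P lam V (p, texp 0)) = PT_to_Z (p, texp 0)"
        using Y_non_subset texp_in_torus by (intro g_orbit_proj) auto
      ultimately show ?thesis
        using False x by (simp add: Z_to_Q_def PT_to_Z_def Z_rescale_def H_1_Y_non \<sigma>_Y)
    qed
  qed
  show "Z_rescale (1, x) = Z_deform x" for x by (simp add: Z_rescale_def Z_deform_def)
qed

lemma homotopic_Z_to_Q_g_id:
  "homotopic_with (\<lambda>x. True) (orbit_space P lam (texp ` V)) (orbit_space P lam (texp ` V)) (Z_to_Q \<circ> g) id"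
proof -
  obtain L where L: "continuous_map (prod_topology (top_of_set {0..1::real}) (orbit_space P lam (texp ` V)))
      (orbit_space P lam (texp ` V)) L"
    "\<And>s p t. s \<in> {0..1} \<Longrightarrow> p \<in> P \<Longrightarrow> t \<in> torus \<Longrightarrow>
      L (s, orbit_proj P lam V (p, t)) = orbit_proj P lam V (H (s, p), t)"
    using orbit_space_deformation by blast
  have "homotopic_with (\<lambda>x. True) (orbit_space P lam (texp ` V)) (orbit_space P lam (texp ` V))
      id (Z_to_Q \<circ> g)"
  proof (rule homotopic_with_by_homotopy[OF L(1)])
    fix W assume "W \<in> topspace (orbit_space P lam (texp ` V))"
    then obtain p t where pt: "p \<in> P" "t \<in> torus" "W = orbit_proj P lam V (p, t)"
      by (rule orbit_space_pointE[OF subspace_V])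
    show "L (0, W) = id W" using L(2)[of 0] pt by (simp add: H_0)
    show "L (1, W) = (Z_to_Q \<circ> g) W" using L(2)[of 1] pt by (simp add: g_orbit_proj Z_to_Q_PT_to_Z)
  qed
  then show ?thesis by (rule homotopic_with_symD)
qed

end

lemma homotopy_equivalent_Z_non_orbit_space_of_deformation:
  "top_of_set (Z_non P lam V) homotopy_equivalent_space orbit_space P lam (texp ` V)"
proof -
  obtain g where g: "continuous_map (orbit_space P lam (texp ` V)) (top_of_set (Z_non P lam V)) g"
    "g ` topspace (orbit_space P lam (texp ` V)) = PT_to_Z ` topspace (top_of_set (P \<times> torus))"
    "\<And>x. x \<in> topspace (top_of_set (P \<times> torus)) \<Longrightarrow> g (orbit_proj P lam V x) = PT_to_Z x"
    by (rule quotient_map_lift_exists[OF quotient_map_orbit_proj[OF subspace_V] continuous_map_PT_to_Z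
      PT_to_Z_orbit_invariant]) (auto intro: that)
  have g_orbit_proj: "g (orbit_proj P lam V x) = PT_to_Z x" if "x \<in> P \<times> torus" for x
    using g(3) that by simp
  have "homotopic_with (\<lambda>x. True) (top_of_set (Z_non P lam V)) (top_of_set (Z_non P lam V)) (g \<circ> Z_to_Q) id"
    using homotopic_g_Z_to_Q_Z_deform[OF g_orbit_proj] homotopic_Z_deform_id
    by (rule homotopic_with_trans)
  then show ?thesis
    unfolding homotopy_equivalent_space_def
    using continuous_map_Z_to_Q g(1) homotopic_Z_to_Q_g_id[OF g_orbit_proj] by blast
qed

end

lemma homotopy_equivalent_Z_non_orbit_space:
  "top_of_set (Z_non P lam V) homotopy_equivalent_space orbit_space P lam (texp ` V)"
proof -
  have "compact P" "convex P" using P by (simp_all add: polytope_imp_compact polytope_imp_convex)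
  then obtain H and \<sigma> :: "real^'n \<Rightarrow> real" where "continuous_on ({0..1::real} \<times> P) H" "H ` ({0..1} \<times> P) \<subseteq> P"
    "\<And>p. H (0, p) = p" "\<And>s y. s \<in> {0..1} \<Longrightarrow> y \<in> Y_non P lam V \<Longrightarrow> H (s, y) = y"
    "continuous_on P \<sigma>" "\<And>p. p \<in> P \<Longrightarrow> 0 \<le> \<sigma> p \<and> \<sigma> p \<le> 1"
    "\<And>y. y \<in> Y_non P lam V \<Longrightarrow> \<sigma> y = 0" "\<And>p. p \<in> P \<Longrightarrow> \<sigma> p < 1 \<Longrightarrow> H (1, p) \<in> Y_non P lam V"
    by (rule ANR_deformation_cutoff[OF _ _ closed_Y_non[OF P] Y_non_subset ANR_Y_non[OF P]]) (rule that)
  then show ?thesis by (rule homotopy_equivalent_Z_non_orbit_space_of_deformation)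
qed

end

theorem lemma3p2:
  fixes P :: "(real^'n) set"
    and lam :: "(real^'n) set \<Rightarrow> real^'n"
    and V :: "(real^'n) set"
  assumes "simple_polytope P"
    and "characteristic_function P lam"
    and "rational_hyperplane V"
    and "\<forall>c \<in> topspace (quasitoric P lam). connected (qt_stabilizer (texp ` V) c)"
  shows "top_of_set (Z_non P lam V) homotopy_equivalent_space orbit_space P lam (texp ` V)"
proof -
  obtain c u where "c \<in> int_lattice" "u \<in> int_lattice" "c \<bullet> u = 1" "V = {v. c \<bullet> v = 0}"
    using rational_hyperplane_primitive_normal[OF assms(3)] by blast
  moreover have "polytope P" using assms(1) by (simp add: simple_polytope_def)
  moreover have "\<And>F. F facet_of P \<Longrightarrow> lam F \<in> int_lattice"
    using assms(2) by (simp add: characteristic_function_def)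
  ultimately show ?thesis by (intro homotopy_equivalent_Z_non_orbit_space)
qed

end
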